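(* Let $k\ge 2$ and let $\mathcal{C}$ be the full flag code on $\mathbb{F}_q^{2k}$ constructed from a $k$-spread as described in the context. Let $\mathcal{F}=(\mathcal{F}_1,\ldots,\mathcal{F}_{2k-1})\in\mathcal{C}$ and let $\mathcal{X}=(\mathcal{X}_1,\ldots,\mathcal{X}_{2k-1})$ be a sequence of subspaces with $\mathcal{X}_i\subseteq\mathcal{F}_i$ for all $i$ and $\mathcal{X}_1=\cdots=\mathcal{X}_k=\{0\}$. Suppose there is $i\in\{k+1,\ldots,2k-1\}$ with $\dim\mathcal{X}_i>2(i-k)$, and let $i$ be the minimum such index. Then $\mathcal{F}$ is the unique flag $\mathcal{G}=(\mathcal{G}_1,\ldots,\mathcal{G}_{2k-1})\in\mathcal{C}$ with $\mathcal{X}_i\subseteq\mathcal{G}_i$.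
   Context: $q$ is a prime power. Construction: let $\{\mathcal{S}_1,\ldots,\mathcal{S}_{q^k+1}\}$ be a $k$-spread of $\mathbb{F}_q^{2k}$ (a set of $q^k+1$ $k$-dimensional subspaces pairwise intersecting trivially), with full-rank $k\times 2k$ generator matrices $\mathrm{S}_i$ (row space $\mathcal{S}_i$). Let $\mathrm{W}_i=\begin{pmatrix}\mathrm{S}_i\\ \mathrm{S}_{i+1}\end{pmatrix}$ for $i\le q^k$ and $\mathrm{W}_{q^k+1}=\begin{pmatrix}\mathrm{S}_{q^k+1}\\ \mathrm{S}_1\end{pmatrix}$, let $\mathcal{W}_i^{(j)}$ be the row space of the first $j$ rows of $\mathrm{W}_i$, and $\mathcal{C}=\{(\mathcal{W}_i^{(1)},\ldots,\mathcal{W}_i^{(2k-1)}): 1\le i\le q^k+1\}$. *)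

theory Defs
  imports "HOL-Analysis.Analysis"
begin

text \<open>Vectors of F_q^(2k) are elements of 'a^'n with CARD('n) = 2k, 'a a finite field.
  A k x 2k generator matrix is given by its rows: S i j for j < k.\<close>

definition row_space :: "(nat \<Rightarrow> 'a::field^'n) \<Rightarrow> nat \<Rightarrow> ('a^'n) set" where
  "row_space M r = vec.span {M j | j. j < r}"

definition is_spread_gen :: "nat \<Rightarrow> (nat \<Rightarrow> nat \<Rightarrow> 'a::{finite,field}^'n) \<Rightarrow> bool" where
  "is_spread_gen k S \<longleftrightarrow>
     (\<forall>i\<in>{1..CARD('a)^k+1}. vec.dim (row_space (S i) k) = k) \<and>
     (\<forall>i\<in>{1..CARD('a)^k+1}. \<forall>i'\<in>{1..CARD('a)^k+1}. i \<noteq> i' \<longrightarrow>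
        row_space (S i) k \<inter> row_space (S i') k = {0})"

definition spread_next :: "nat \<Rightarrow> nat \<Rightarrow> nat \<Rightarrow> nat" where
  "spread_next q k i = (if i \<le> q^k then i + 1 else 1)"

definition W_rows :: "nat \<Rightarrow> (nat \<Rightarrow> nat \<Rightarrow> 'a::{finite,field}^'n) \<Rightarrow> nat \<Rightarrow> nat \<Rightarrow> 'a^'n" where
  "W_rows k S i r = (if r < k then S i r else S (spread_next CARD('a) k i) (r - k))"

text \<open>W_i^(j): row space of the first j rows of W_i; the j-th subspace of the i-th flag of C.\<close>
definition Wsub :: "nat \<Rightarrow> (nat \<Rightarrow> nat \<Rightarrow> 'a::{finite,field}^'n) \<Rightarrow> nat \<Rightarrow> nat \<Rightarrow> ('a^'n) set" where
  "Wsub k S i j = row_space (W_rows k S i) j"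

end

theory Submission
  imports Defs
begin

text \<open>Each flag of the code contains its own spread element in its subspaces of dimension at
  least \<open>k\<close>. For distinct flags these two \<open>k\<close>-dimensional spaces meet trivially, so the sum of the
  \<open>m\<close>-th subspaces of two distinct flags has dimension at least \<open>2k\<close>, and by Grassmann's formula
  their intersection has dimension at most \<open>2m - 2k\<close>. A space of larger dimension therefore lies
  in the \<open>m\<close>-th subspace of at most one flag.\<close>

context finite_dimensional_vector_space
begin

lemma dim_Int_add_dim_le_if_disjoint_subspaces:
  assumes "subspace U" "subspace V" "subspace A" "subspace B"
    and "A \<subseteq> U" "B \<subseteq> V" "A \<inter> B = {0}"
  shows "dim (U \<inter> V) + (dim A + dim B) \<le> dim U + dim V"
proof -
  have "dim A + dim B = dim {a + b |a b. a \<in> A \<and> b \<in> B}"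
    using dim_sums_Int[OF \<open>subspace A\<close> \<open>subspace B\<close>] \<open>A \<inter> B = {0}\<close> by simp
  also have "\<dots> \<le> dim {u + v |u v. u \<in> U \<and> v \<in> V}"
    using \<open>A \<subseteq> U\<close> \<open>B \<subseteq> V\<close> by (intro dim_subset) blast
  finally show ?thesis
    using dim_sums_Int[OF \<open>subspace U\<close> \<open>subspace V\<close>] by linarith
qed

end

lemma subspace_row_space: "vec.subspace (row_space M r)"
  unfolding row_space_def by (rule vec.subspace_span)

lemma dim_row_space_le: "vec.dim (row_space M r) \<le> r"
proof -
  have "row_space M r = vec.span (M ` {..<r})"
    unfolding row_space_def by (simp add: image_Collect lessThan_def)
  then have "vec.dim (row_space M r) \<le> card (M ` {..<r})"
    by (simp add: vec.dim_le_card')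
  also have "\<dots> \<le> r"
    using card_image_le[of "{..<r}" M] by simp
  finally show ?thesis .
qed

lemma subspace_Wsub: "vec.subspace (Wsub k S i j)"
  unfolding Wsub_def by (rule subspace_row_space)

lemma dim_Wsub_le: "vec.dim (Wsub k S i j) \<le> j"
  unfolding Wsub_def by (rule dim_row_space_le)

lemma row_space_subset_Wsub: "k \<le> j \<Longrightarrow> row_space (S i) k \<subseteq> Wsub k S i j"
  unfolding Wsub_def row_space_def W_rows_def by (rule vec.span_mono) force

lemma dim_Wsub_Int_le:
  fixes S :: "nat \<Rightarrow> nat \<Rightarrow> 'a::{finite,field}^'n"
  assumes spread: "is_spread_gen k S"
    and i: "i \<in> {1..CARD('a)^k+1}" and i': "i' \<in> {1..CARD('a)^k+1}" and "i \<noteq> i'"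
    and "k \<le> m"
  shows "vec.dim (Wsub k S i m \<inter> Wsub k S i' m) \<le> 2 * (m - k)"
proof -
  have dims: "\<forall>j\<in>{1..CARD('a)^k+1}. vec.dim (row_space (S j) k) = k"
    using spread unfolding is_spread_gen_def by (rule conjunct1)
  have disjoint: "\<forall>j\<in>{1..CARD('a)^k+1}. \<forall>j'\<in>{1..CARD('a)^k+1}. j \<noteq> j' \<longrightarrow>
      row_space (S j) k \<inter> row_space (S j') k = {0}"
    using spread unfolding is_spread_gen_def by (rule conjunct2)
  have "vec.dim (Wsub k S i m \<inter> Wsub k S i' m)
      + (vec.dim (row_space (S i) k) + vec.dim (row_space (S i') k))
      \<le> vec.dim (Wsub k S i m) + vec.dim (Wsub k S i' m)"
    by (rule vec.dim_Int_add_dim_le_if_disjoint_subspaces[OF subspace_Wsub subspace_Wsub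
          subspace_row_space subspace_row_space row_space_subset_Wsub[of k m S i, OF \<open>k \<le> m\<close>]
          row_space_subset_Wsub[of k m S i', OF \<open>k \<le> m\<close>] disjoint[rule_format, OF i i' \<open>i \<noteq> i'\<close>]])
  then show ?thesis
    using dims[rule_format, OF i] dims[rule_format, OF i'] dim_Wsub_le[of k S i m]
      dim_Wsub_le[of k S i' m]
    by linarith
qed

theorem proposition4p13:
  fixes S :: "nat \<Rightarrow> nat \<Rightarrow> 'a::{finite,field}^'n"
    and X :: "nat \<Rightarrow> ('a^'n) set"
    and k i0 m :: nat
  assumes k2: "k \<ge> 2"
    and dimn: "CARD('n) = 2 * k"
    and spread: "is_spread_gen k S"
    and i0: "i0 \<in> {1..CARD('a)^k+1}"
    and Xsub: "\<forall>j\<in>{1..2*k-1}. vec.subspace (X j) \<and> X j \<subseteq> Wsub k S i0 j"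
    and Xzero: "\<forall>j\<in>{1..k}. X j = {0}"
    and m: "m \<in> {k+1..2*k-1}"
    and dimm: "vec.dim (X m) > 2 * (m - k)"
    and minm: "\<forall>j\<in>{k+1..<m}. vec.dim (X j) \<le> 2 * (j - k)"
  shows "\<forall>i\<in>{1..CARD('a)^k+1}. X m \<subseteq> Wsub k S i m \<longleftrightarrow>
           (\<forall>j\<in>{1..2*k-1}. Wsub k S i j = Wsub k S i0 j)"
proof (intro ballI, rule iffI)
  fix i assume i: "i \<in> {1..CARD('a)^k+1}" and "X m \<subseteq> Wsub k S i m"
  moreover have "X m \<subseteq> Wsub k S i0 m"
    using Xsub m by auto
  ultimately have "vec.dim (X m) \<le> vec.dim (Wsub k S i m \<inter> Wsub k S i0 m)"
    by (intro vec.dim_subset) blast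
  moreover have "vec.dim (Wsub k S i m \<inter> Wsub k S i0 m) \<le> 2 * (m - k)" if "i \<noteq> i0"
    using dim_Wsub_Int_le[OF spread i i0 that] m by simp
  ultimately have "i = i0"
    using dimm by linarith
  then show "\<forall>j\<in>{1..2*k-1}. Wsub k S i j = Wsub k S i0 j"
    by simp
next
  fix i assume "\<forall>j\<in>{1..2*k-1}. Wsub k S i j = Wsub k S i0 j"
  then show "X m \<subseteq> Wsub k S i m"
    using Xsub m by auto
qed

end
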